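(* Let $R,S$ be finite nonempty sets, $k$ a positive integer, $p_r>0$ ($r\in R$), $T=\sum_{r\in R}p_r$, $d_{r,s}\ge0$, and $\kappa<0$. Let $F$ be the set of $(\mathbf x,\mathbf y)$ with $x_s,y_{r,s}\in\{0,1\}$, $\sum_{s\in S}x_s=k$, $y_{r,s}\le x_s$, and $\sum_{s\in S}y_{r,s}=1$ for all $r$. For $\mathbf y$ let $\overline{\mathcal K}(\mathbf y)=\sum_{r,s}p_ry_{r,s}e^{-\kappa d_{r,s}}$ and $\mathcal K(\mathbf y)=-\frac1\kappa\ln\left(\frac1T\overline{\mathcal K}(\mathbf y)\right)$. Let $U\subseteq S$, $c_s\ge0$ for $s\in U$, $\sigma(\mathbf x)=\sum_{s\in U}c_sx_s$. Let $(\mathbf x^{all},\mathbf y^{all})$ be an optimal solution of $\min\{\overline{\mathcal K}(\mathbf y):(\mathbf x,\mathbf y)\in F\}$, and set $\mathcal K^{all}=\mathcal K(\mathbf y^{all})$ and $\sigma^{all}=\sigma(\mathbf x^{all})$. Set $\hat{\mathcal K}=\mathcal K^{all}$ and let $(\mathbf x^*,\mathbf y^*,v^*,q^* )$ be optimal for \[ \text{(KPL}^p)\quad \min\ \overline{\mathcal K}(\mathbf y)+Te^{-\kappa\hat{\mathcal K}}(v-1)\ \text{ s.t. } (\mathbf x,\mathbf y)\in F,\ v\ge e^{q},\ q=-\kappa\,\sigma(\mathbf x). \] Let $\sigma^*=\sigma(\mathbf x^* )$, $\mathcal K^*=\mathcal K(\mathbf y^* )$, $\Delta=\hat{\mathcal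 K}-\mathcal K^*$, and define $\hat\sigma$ by \[ \mathcal K^*+\hat\sigma=-\frac1\kappa\ln\left(\frac1T\left(\overline{\mathcal K}(\mathbf y^* )+Te^{-\kappa\hat{\mathcal K}}\left(e^{-\kappa\sigma^*}-1\right)\right)\right). \] Then the penalized locations are under-penalized, i.e. $\hat\sigma\le\sigma^*$, and \[ \sigma^*-\hat\sigma\le|\Delta|\left(1-e^{\kappa\sigma^*}\right)\le\sigma^{all}\left(1-e^{\kappa\sigma^*}\right)\le\sigma^{all}\left(1-e^{\kappa\sigma^{all}}\right). \]
   Context: $U$ is a set of less desirable potential locations, $c_s$ is the penalty (in distance units) for selecting $s\in U$; $\hat\sigma$ is the penalty actually applied to the optimal Kolm–Pollak score by (KPL$^p$), whose parameter $\hat{\mathcal K}$ approximates the optimal unpenalized Kolm–Pollak score $\mathcal K^*$. *)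

theory Defs
  imports Complex_Main
begin

definition feas :: "'r set \<Rightarrow> 's set \<Rightarrow> nat \<Rightarrow> (('s \<Rightarrow> real) \<times> ('r \<Rightarrow> 's \<Rightarrow> real)) set" where
  "feas R S k = {(x, y).
      (\<forall>s\<in>S. x s \<in> {0, 1}) \<and>
      (\<forall>r\<in>R. \<forall>s\<in>S. y r s \<in> {0, 1}) \<and>
      (\<Sum>s\<in>S. x s) = real k \<and>
      (\<forall>r\<in>R. \<forall>s\<in>S. y r s \<le> x s) \<and>
      (\<forall>r\<in>R. (\<Sum>s\<in>S. y r s) = 1)}"

definition Kbar :: "'r set \<Rightarrow> 's set \<Rightarrow> ('r \<Rightarrow> real) \<Rightarrow> ('r \<Rightarrow> 's \<Rightarrow> real) \<Rightarrow> real
    \<Rightarrow> ('r \<Rightarrow> 's \<Rightarrow> real) \<Rightarrow> real" where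
  "Kbar R S p d \<kappa> y = (\<Sum>r\<in>R. \<Sum>s\<in>S. p r * y r s * exp (- \<kappa> * d r s))"

definition KP :: "'r set \<Rightarrow> 's set \<Rightarrow> ('r \<Rightarrow> real) \<Rightarrow> ('r \<Rightarrow> 's \<Rightarrow> real) \<Rightarrow> real
    \<Rightarrow> ('r \<Rightarrow> 's \<Rightarrow> real) \<Rightarrow> real" where
  "KP R S p d \<kappa> y = - (1 / \<kappa>) * ln ((1 / (\<Sum>r\<in>R. p r)) * Kbar R S p d \<kappa> y)"

definition pen :: "'s set \<Rightarrow> ('s \<Rightarrow> real) \<Rightarrow> ('s \<Rightarrow> real) \<Rightarrow> real" where
  "pen U c x = (\<Sum>s\<in>U. c s * x s)"

end

theory Submission
  imports Defs "HOL-Analysis.Analysis"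
begin

(* Write a = -kappa > 0. Since T e^(a K(y)) = Kbar(y), the recovered penalty satisfies
   e^(a (K_star + sigma_hat)) = e^(a K_star) + e^(a K_hat) (e^(a sigma_star) - 1), the convex
   combination of e^(a (K_star + sigma_star)) and e^(a (K_hat + sigma_star)) with weights 1 - w
   and w = 1 - e^(-a sigma_star). As K_hat <= K_star, this gives sigma_hat <= sigma_star, and
   concavity of ln bounds the loss sigma_star - sigma_hat by w (K_star - K_hat) = w |Delta|.
   Comparing the optimum of (KPL^p) with the feasible point (x_all, y_all, e^(a sigma_all))
   yields sigma_star <= sigma_all and |Delta| <= sigma_all. *)

lemma ln_convex_comb_one_ge:
  fixes w u :: real
  assumes "0 \<le> w" "w \<le> 1" "0 < u"
  shows "w * ln u \<le> ln (w * u + (1 - w))"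
proof -
  have "w * ln u + (1 - w) * ln 1 \<le> ln (w * u + (1 - w) * 1)"
    using ln_concave[unfolded concave_on_iff, THEN conjunct2, rule_format,
        where x=u and y=1 and u=w and v="1 - w"] assms
    by simp
  then show ?thesis by simp
qed

lemma recovered_penalty_bounds:
  fixes \<kappa> K Kh \<sigma> :: real
  assumes "\<kappa> < 0" "Kh \<le> K" "0 \<le> \<sigma>"
  defines "\<sigma>hat \<equiv> - (1 / \<kappa>) * ln (exp (- \<kappa> * K) + exp (- \<kappa> * Kh) * (exp (- \<kappa> * \<sigma>) - 1)) - K"
  shows "\<sigma>hat \<le> \<sigma>" and "\<sigma> - \<sigma>hat \<le> (K - Kh) * (1 - exp (\<kappa> * \<sigma>))"
proof -
  define w where "w = 1 - exp (\<kappa> * \<sigma>)"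
  define t where "t = exp (- \<kappa> * (Kh - K))"
  define m where "m = w * t + (1 - w)"
  have w: "0 \<le> w" "w \<le> 1"
    using assms(1,3) by (auto simp: w_def mult_nonpos_nonneg)
  have t: "0 < t" "t \<le> 1"
    using assms(1,2) by (auto simp: t_def mult_nonpos_nonpos)
  have "0 \<le> w * (1 - t)" "w * (1 - t) \<le> 1 - t"
    using w t by (auto intro: mult_left_le_one_le)
  then have m: "0 < m" "m \<le> 1"
    using t by (auto simp: m_def algebra_simps)
  have "exp (- \<kappa> * K) + exp (- \<kappa> * Kh) * (exp (- \<kappa> * \<sigma>) - 1) = exp (- \<kappa> * (K + \<sigma>)) * m"
    by (simp add: m_def w_def t_def algebra_simps flip: exp_add)
  then have \<sigma>hat_eq: "\<sigma>hat = \<sigma> + ln m / (- \<kappa>)"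
    using assms(1) m(1) by (simp add: \<sigma>hat_def ln_mult field_simps)
  show "\<sigma>hat \<le> \<sigma>"
    using m assms(1) by (simp add: \<sigma>hat_eq divide_nonpos_neg)
  have "w * (- \<kappa> * (Kh - K)) \<le> ln m"
    using ln_convex_comb_one_ge[OF w t(1)] by (simp add: m_def t_def)
  then have "- ln m \<le> (K - Kh) * w * (- \<kappa>)"
    by (simp add: algebra_simps)
  then have "- ln m / (- \<kappa>) \<le> (K - Kh) * w"
    using assms(1) by (simp only: pos_divide_le_eq neg_0_less_iff_less)
  then show "\<sigma> - \<sigma>hat \<le> (K - Kh) * (1 - exp (\<kappa> * \<sigma>))"
    by (simp add: \<sigma>hat_eq w_def)
qed

lemma Kbar_feas_pos:
  assumes "finite R" "R \<noteq> {}" "finite S" "\<forall>r\<in>R. p r > 0" "(x, y) \<in> feas R S k"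
  shows "Kbar R S p d \<kappa> y > 0"
proof -
  have pos: "(\<Sum>s\<in>S. p r * y r s * exp (- \<kappa> * d r s)) > 0" if r: "r \<in> R" for r
  proof -
    have y01: "\<forall>s\<in>S. y r s \<in> {0,1}" and ys: "(\<Sum>s\<in>S. y r s) = 1"
      using assms(5) r unfolding feas_def by auto
    obtain s where s: "s \<in> S" "y r s \<noteq> 0"
      using ys by (metis sum.neutral zero_neq_one)
    then have "y r s = 1" using y01 by auto
    have "(\<Sum>s\<in>S. p r * y r s * exp (- \<kappa> * d r s)) \<ge> p r * y r s * exp (- \<kappa> * d r s)"
      by (rule member_le_sum) (use s y01 r assms(3,4) in \<open>auto intro!: mult_nonneg_nonneg\<close>)
    moreover have "p r * y r s * exp (- \<kappa> * d r s) > 0" using \<open>y r s = 1\<close> r assms(4) by simp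
    ultimately show ?thesis by linarith
  qed
  show ?thesis unfolding Kbar_def
    by (rule sum_pos) (use assms pos in auto)
qed

lemma pen_feas_nonneg:
  assumes "finite S" "U \<subseteq> S" "\<forall>s\<in>U. c s \<ge> 0" "(x, y) \<in> feas R S k"
  shows "pen U c x \<ge> 0"
proof -
  have "\<forall>s\<in>S. x s \<in> {0,1}" using assms(4) unfolding feas_def by auto
  then have "\<forall>s\<in>U. x s \<ge> 0" using assms(2) by fastforce
  then show ?thesis unfolding pen_def using assms(3)
    by (intro sum_nonneg) simp
qed

lemma exp_KP:
  assumes "\<kappa> \<noteq> 0" "0 < (\<Sum>r\<in>R. p r)" "0 < Kbar R S p d \<kappa> y"
  shows "(\<Sum>r\<in>R. p r) * exp (- \<kappa> * KP R S p d \<kappa> y) = Kbar R S p d \<kappa> y"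
  using assms by (simp add: KP_def)

lemma KP_mono:
  assumes "\<kappa> < 0" "0 < (\<Sum>r\<in>R. p r)" "0 < Kbar R S p d \<kappa> y" "Kbar R S p d \<kappa> y \<le> Kbar R S p d \<kappa> y'"
  shows "KP R S p d \<kappa> y \<le> KP R S p d \<kappa> y'"
proof -
  have "(\<Sum>r\<in>R. p r) * exp (- \<kappa> * KP R S p d \<kappa> y) \<le> (\<Sum>r\<in>R. p r) * exp (- \<kappa> * KP R S p d \<kappa> y')"
    using assms exp_KP[of \<kappa> p R S d y] exp_KP[of \<kappa> p R S d y'] by simp
  then have "exp (- \<kappa> * KP R S p d \<kappa> y) \<le> exp (- \<kappa> * KP R S p d \<kappa> y')"
    using assms(2) by (simp only: mult_le_cancel_left_pos)
  then show ?thesis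
    using assms(1) by simp
qed

text \<open>The last hypothesis is the optimality of \<open>(y, v)\<close> in (KPL^p), tested against the
  feasible point \<open>(y', exp (- \<kappa> * \<sigma>'))\<close>.\<close>

lemma penalized_optimum_bounds:
  assumes "\<kappa> < 0" "0 < (\<Sum>r\<in>R. p r)"
    and "0 < Kbar R S p d \<kappa> y'" "Kbar R S p d \<kappa> y' \<le> Kbar R S p d \<kappa> y"
    and "0 \<le> \<sigma>" "exp (- \<kappa> * \<sigma>) \<le> v"
    and "Kbar R S p d \<kappa> y + (\<Sum>r\<in>R. p r) * exp (- \<kappa> * KP R S p d \<kappa> y') * (v - 1)
      \<le> Kbar R S p d \<kappa> y' + (\<Sum>r\<in>R. p r) * exp (- \<kappa> * KP R S p d \<kappa> y') * (exp (- \<kappa> * \<sigma>') - 1)"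
  shows "\<sigma> \<le> \<sigma>'" and "KP R S p d \<kappa> y - KP R S p d \<kappa> y' \<le> \<sigma>'"
proof -
  let ?T = "\<Sum>r\<in>R. p r"
  let ?K' = "Kbar R S p d \<kappa> y'" and ?K = "Kbar R S p d \<kappa> y"
  have e': "?T * exp (- \<kappa> * KP R S p d \<kappa> y') = ?K'"
    using assms(1-3) by (intro exp_KP) auto
  have e: "?T * exp (- \<kappa> * KP R S p d \<kappa> y) = ?K"
    using assms(1-4) by (intro exp_KP) auto
  have opt: "?K + ?K' * (v - 1) \<le> ?K' * exp (- \<kappa> * \<sigma>')"
    using assms(7) unfolding e' by (simp add: algebra_simps)
  have "?K' * (v - 1) \<le> ?K' * (exp (- \<kappa> * \<sigma>') - 1)"
    using opt assms(4) by (simp add: algebra_simps)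
  then have "v \<le> exp (- \<kappa> * \<sigma>')"
    using assms(3) by (simp add: mult_le_cancel_left_pos)
  then have "exp (- \<kappa> * \<sigma>) \<le> exp (- \<kappa> * \<sigma>')"
    using assms(6) by (rule order_trans[rotated])
  then show "\<sigma> \<le> \<sigma>'"
    using assms(1) by simp
  have "0 \<le> - \<kappa> * \<sigma>"
    using assms(1,5) by (simp add: mult_nonpos_nonneg)
  then have "1 \<le> v"
    using assms(6) one_le_exp_iff[of "- \<kappa> * \<sigma>"] by linarith
  then have "0 \<le> ?K' * (v - 1)"
    using assms(3) by simp
  then have "?K \<le> ?K' * exp (- \<kappa> * \<sigma>')"
    using opt by linarith
  then have "?T * exp (- \<kappa> * KP R S p d \<kappa> y) \<le> ?T * exp (- \<kappa> * (KP R S p d \<kappa> y' + \<sigma>'))"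
    unfolding e e'[symmetric] mult.assoc mult_exp_exp by (simp add: algebra_simps)
  then show "KP R S p d \<kappa> y - KP R S p d \<kappa> y' \<le> \<sigma>'"
    using assms(1,2) by simp
qed

theorem theorem4:
  fixes R :: "'r set" and S :: "'s set" and k :: nat
    and p :: "'r \<Rightarrow> real" and d :: "'r \<Rightarrow> 's \<Rightarrow> real" and \<kappa> :: real
    and U :: "'s set" and c :: "'s \<Rightarrow> real"
    and xall :: "'s \<Rightarrow> real" and yall :: "'r \<Rightarrow> 's \<Rightarrow> real"
    and xs :: "'s \<Rightarrow> real" and ys :: "'r \<Rightarrow> 's \<Rightarrow> real" and vs qs :: real
  assumes "finite R" "R \<noteq> {}" "finite S" "S \<noteq> {}" "k > 0"
    and "\<forall>r\<in>R. p r > 0"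
    and "\<forall>r\<in>R. \<forall>s\<in>S. d r s \<ge> 0"
    and "\<kappa> < 0"
    and "U \<subseteq> S" "\<forall>s\<in>U. c s \<ge> 0"
    and all_feas: "(xall, yall) \<in> feas R S k"
    and all_opt: "\<forall>(x, y)\<in>feas R S k. Kbar R S p d \<kappa> yall \<le> Kbar R S p d \<kappa> y"
    and star_feas: "(xs, ys) \<in> feas R S k" "vs \<ge> exp qs" "qs = - \<kappa> * pen U c xs"
    and star_opt: "\<forall>x y v q. (x, y) \<in> feas R S k \<and> v \<ge> exp q \<and> q = - \<kappa> * pen U c x \<longrightarrow>
        Kbar R S p d \<kappa> ys + (\<Sum>r\<in>R. p r) * exp (- \<kappa> * KP R S p d \<kappa> yall) * (vs - 1)
        \<le> Kbar R S p d \<kappa> y + (\<Sum>r\<in>R. p r) * exp (- \<kappa> * KP R S p d \<kappa> yall) * (v - 1)"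
  shows
    "let T = (\<Sum>r\<in>R. p r);
         Kall = KP R S p d \<kappa> yall; \<sigma>all = pen U c xall;
         Khat = Kall;
         \<sigma>s = pen U c xs; Ks = KP R S p d \<kappa> ys; \<Delta> = Khat - Ks;
         \<sigma>hat = - (1 / \<kappa>) * ln ((1 / T) * (Kbar R S p d \<kappa> ys
                   + T * exp (- \<kappa> * Khat) * (exp (- \<kappa> * \<sigma>s) - 1))) - Ks
     in \<sigma>hat \<le> \<sigma>s
        \<and> \<sigma>s - \<sigma>hat \<le> \<bar>\<Delta>\<bar> * (1 - exp (\<kappa> * \<sigma>s))
        \<and> \<bar>\<Delta>\<bar> * (1 - exp (\<kappa> * \<sigma>s)) \<le> \<sigma>all * (1 - exp (\<kappa> * \<sigma>s))
        \<and> \<sigma>all * (1 - exp (\<kappa> * \<sigma>s)) \<le> \<sigma>all * (1 - exp (\<kappa> * \<sigma>all))"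
proof -
  let ?T = "\<Sum>r\<in>R. p r"
  let ?Kall = "KP R S p d \<kappa> yall" and ?Ks = "KP R S p d \<kappa> ys"
  let ?\<sigma>all = "pen U c xall" and ?\<sigma>s = "pen U c xs"
  have T: "0 < ?T"
    using assms(1,2,6) by (intro sum_pos) auto
  have Kbar_all: "0 < Kbar R S p d \<kappa> yall" "Kbar R S p d \<kappa> yall \<le> Kbar R S p d \<kappa> ys"
    using Kbar_feas_pos[OF assms(1-3,6) all_feas] all_opt star_feas(1) by auto
  have \<sigma>: "0 \<le> ?\<sigma>all" "0 \<le> ?\<sigma>s"
    using pen_feas_nonneg[OF assms(3,9,10)] all_feas star_feas(1) by auto
  have "exp (- \<kappa> * ?\<sigma>s) \<le> vs"
    using star_feas(2,3) by simp
  then have "?\<sigma>s \<le> ?\<sigma>all" and gap: "?Ks - ?Kall \<le> ?\<sigma>all"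
    using penalized_optimum_bounds[OF assms(8) T Kbar_all \<sigma>(2)]
      star_opt[rule_format, OF conjI[OF all_feas conjI[OF order_refl refl]]] by auto
  have "?Kall \<le> ?Ks"
    using KP_mono[OF assms(8) T Kbar_all] .
  have "(1 / ?T) * (Kbar R S p d \<kappa> ys + ?T * exp (- \<kappa> * ?Kall) * (exp (- \<kappa> * ?\<sigma>s) - 1))
      = exp (- \<kappa> * ?Ks) + exp (- \<kappa> * ?Kall) * (exp (- \<kappa> * ?\<sigma>s) - 1)"
    using T exp_KP[of \<kappa> p R S d ys] Kbar_all assms(8) by (simp add: field_simps)
  moreover have "\<bar>?Kall - ?Ks\<bar> = ?Ks - ?Kall"
    using \<open>?Kall \<le> ?Ks\<close> by simp
  moreover note recovered_penalty_bounds[OF assms(8) \<open>?Kall \<le> ?Ks\<close> \<sigma>(2)]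
  moreover have "(?Ks - ?Kall) * (1 - exp (\<kappa> * ?\<sigma>s)) \<le> ?\<sigma>all * (1 - exp (\<kappa> * ?\<sigma>s))"
    using gap \<sigma>(2) assms(8) by (intro mult_right_mono) (auto simp: mult_nonpos_nonneg)
  moreover have "?\<sigma>all * (1 - exp (\<kappa> * ?\<sigma>s)) \<le> ?\<sigma>all * (1 - exp (\<kappa> * ?\<sigma>all))"
    using \<open>?\<sigma>s \<le> ?\<sigma>all\<close> \<sigma>(1) assms(8) by (intro mult_left_mono) auto
  ultimately show ?thesis
    unfolding Let_def by (simp only:)
qed

end
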